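(* Let $\mathcal Z\subset\mathbb R^k$ be compact with diameter $\mathsf D$, let $z$ be a random variable taking values in $\mathcal Z$, and let $f:\mathcal Z\to\mathbb R^d$ be $\mathsf L$-Lipschitz (Euclidean norms). Let $\varepsilon_{\mathrm{noise}}\sim\mathcal N(0,\sigma^2I_d)$, $\sigma>0$, be independent of $z$, set $x^{\mathrm{con}}=f(z)+\varepsilon_{\mathrm{noise}}$, and $x=\mathcal Q_S(x^{\mathrm{con}})$, where $\mathcal Q_S:\mathbb R^d\to\{0,\dots,S\}^d$ is $[\mathcal Q_S(y)]^i=\min\{\max\{\lfloor y^i\rfloor,0\},S\}$. Then the law $q_{\mathrm{data}}$ of $x$ satisfies $$\mathcal B(q_{\mathrm{data}})\le k\log\Big(2+\frac{2\mathsf D\mathsf L}{\sigma}\Big).$$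
   Context: For a random vector $x=(x^1,\dots,x^d)$ with law $q$ on a finite product set, the dual total correlation is $\mathcal B(q)=\mathcal H(x)-\sum_{i=1}^d\mathcal H(x^i\mid x^{-i})$, where $\mathcal H$ is Shannon entropy and $x^{-i}$ is $x$ with coordinate $i$ removed. *)

theory Defs
  imports "HOL-Probability.Probability"
begin

definition quant :: "nat \<Rightarrow> real^'d \<Rightarrow> ('d \<Rightarrow> nat)" where
  "quant S y = (\<lambda>i. nat (min (max \<lfloor>y $ i\<rfloor> 0) (int S)))"

definition iso_gauss_density :: "real \<Rightarrow> real^'d \<Rightarrow> real" where
  "iso_gauss_density \<sigma> y = (\<Prod>i\<in>UNIV. normal_density 0 \<sigma> (y $ i))"

text \<open>Discrete laws q on a finite product set X (functions 'd => 'a).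
  Shannon entropy (natural log, 0 log 0 = 0).\<close>
definition shannon_entropy :: "('d \<Rightarrow> 'a) set \<Rightarrow> (('d \<Rightarrow> 'a) \<Rightarrow> real) \<Rightarrow> real" where
  "shannon_entropy X q = - (\<Sum>x\<in>X. q x * ln (q x))"

definition marg_minus :: "('d \<Rightarrow> 'a) set \<Rightarrow> (('d \<Rightarrow> 'a) \<Rightarrow> real) \<Rightarrow> 'd \<Rightarrow> ('d \<Rightarrow> 'a) \<Rightarrow> real" where
  "marg_minus X q i y = (\<Sum>x\<in>{x\<in>X. \<forall>j. j \<noteq> i \<longrightarrow> x j = y j}. q x)"

definition cond_entropy_coord :: "('d \<Rightarrow> 'a) set \<Rightarrow> (('d \<Rightarrow> 'a) \<Rightarrow> real) \<Rightarrow> 'd \<Rightarrow> real" where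
  "cond_entropy_coord X q i = - (\<Sum>x\<in>X. q x * ln (q x / marg_minus X q i x))"

definition dual_total_correlation :: "('d::finite \<Rightarrow> 'a) set \<Rightarrow> (('d \<Rightarrow> 'a) \<Rightarrow> real) \<Rightarrow> real" where
  "dual_total_correlation X q = shannon_entropy X q - (\<Sum>i\<in>UNIV. cond_entropy_coord X q i)"

end

theory Submission
  imports Defs
begin

text \<open>Given z = v, the coordinates of x are independent quantised Gaussians centred at the
  coordinates of f v, so q_data is a mixture of product laws P_v. For such a mixture the entropy
  is at most the cross entropy against any reference law Q, while by concavity (the log-sum
  inequality) H(x^i | x^{-i}) is at least the average entropy of the i-th coordinate of P_v;
  hence B(q_data) is at most sup_v KL(P_v || Q). Take Q the uniform mixture of the P_u, u ranging
  over representatives of a grid of n^k cells of mesh D/n with n = floor(D L / sigma) + 1.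
  Quantisation only decreases KL, so KL(P_v || P_u) <= |f v - f u|^2 / (2 sigma^2) <= k/2 for u
  in the cell of v, and KL(P_v || Q) <= k ln n + k/2 <= k ln (2 + 2 D L / sigma).\<close>

section \<open>Log-sum and Gibbs inequalities\<close>

lemma log_sum_pointwise:
  fixes a b A B :: real
  assumes "0 \<le> a" "0 \<le> b" "b = 0 \<longrightarrow> a = 0" "A > 0" "B > 0"
  shows "a * ln (A / B) + a - b * (A / B) \<le> a * ln (a / b)"
proof (cases "a = 0")
  case True
  then show ?thesis using assms by simp
next
  case False
  then have a: "a > 0" and b: "b > 0" using assms by auto
  have "ln (b * A / (a * B)) \<le> b * A / (a * B) - 1"
    using a b assms by (intro ln_le_minus_one) simp
  moreover have "ln (b * A / (a * B)) = ln (A / B) - ln (a / b)"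
    using a b assms by (simp add: ln_div ln_mult)
  ultimately have "a * (ln (A / B) - ln (a / b)) \<le> a * (b * A / (a * B) - 1)"
    using a by (intro mult_left_mono) auto
  also have "\<dots> = b * (A / B) - a" using a b by (simp add: field_simps)
  finally show ?thesis by (simp add: algebra_simps)
qed

lemma log_sum_integral:
  fixes a b :: "'a \<Rightarrow> real"
  assumes "integrable N a" "integrable N b" "integrable N (\<lambda>t. a t * ln (a t / b t))"
    and "\<And>t. t \<in> space N \<Longrightarrow> 0 \<le> a t \<and> 0 \<le> b t \<and> (b t = 0 \<longrightarrow> a t = 0)"
    and "integral\<^sup>L N a > 0" "integral\<^sup>L N b > 0"
  shows "integral\<^sup>L N a * ln (integral\<^sup>L N a / integral\<^sup>L N b)
           \<le> (\<integral>t. a t * ln (a t / b t) \<partial>N)"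
proof -
  define A B where "A = integral\<^sup>L N a" and "B = integral\<^sup>L N b"
  have "A * ln (A / B) = (\<integral>t. a t * ln (A / B) + a t - b t * (A / B) \<partial>N)"
    using assms(1,2,6) unfolding A_def B_def by simp
  also have "\<dots> \<le> (\<integral>t. a t * ln (a t / b t) \<partial>N)"
  proof (rule integral_mono)
    show "integrable N (\<lambda>t. a t * ln (A / B) + a t - b t * (A / B))"
      using assms(1,2) by simp
    show "a t * ln (A / B) + a t - b t * (A / B) \<le> a t * ln (a t / b t)" if "t \<in> space N" for t
      using assms(4)[OF that] assms(5,6) unfolding A_def B_def by (intro log_sum_pointwise) auto
  qed (rule assms(3))
  finally show ?thesis unfolding A_def B_def .
qed

lemma integral_pos_if_pos_on:
  fixes f :: "'a \<Rightarrow> real"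
  assumes f: "integrable N f" "AE t in N. 0 \<le> f t"
    and A: "A \<in> sets N" "emeasure N A \<noteq> 0" "\<And>t. t \<in> A \<Longrightarrow> f t > 0"
  shows "integral\<^sup>L N f > 0"
proof -
  have "integral\<^sup>L N f \<noteq> 0"
  proof
    assume "integral\<^sup>L N f = 0"
    then have "AE t in N. f t = 0" using integral_nonneg_eq_0_iff_AE[OF f] by simp
    then have "AE t in N. t \<notin> A" by eventually_elim (use A(3) in force)
    moreover have "{t \<in> space N. \<not> t \<notin> A} = A" using sets.sets_into_space[OF A(1)] by auto
    ultimately show False using AE_iff_measurable[OF A(1)] A(2) by simp
  qed
  then show ?thesis using integral_nonneg_AE[OF f(2)] by linarith
qed

lemma shannon_entropy_le_cross_entropy:
  assumes "\<And>x. x \<in> X \<Longrightarrow> 0 \<le> q x" "\<And>x. x \<in> X \<Longrightarrow> Q x > 0"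
    and "(\<Sum>x\<in>X. Q x) \<le> (\<Sum>x\<in>X. q x)"
  shows "shannon_entropy X q \<le> - (\<Sum>x\<in>X. q x * ln (Q x))"
proof -
  have "q x * ln (Q x) - q x * ln (q x) \<le> Q x - q x" if "x \<in> X" for x
  proof (cases "q x = 0")
    case True
    then show ?thesis using assms(2)[OF that] by simp
  next
    case False
    then have "q x * ln (q x / Q x) = q x * ln (q x) - q x * ln (Q x)"
      using assms(1,2)[OF that] by (simp add: ln_div right_diff_distrib)
    moreover have "q x * ln (1 / 1) + q x - Q x * (1 / 1) \<le> q x * ln (q x / Q x)"
      using assms(1,2)[OF that] by (intro log_sum_pointwise) auto
    ultimately show ?thesis by simp
  qed
  then have "(\<Sum>x\<in>X. q x * ln (Q x) - q x * ln (q x)) \<le> (\<Sum>x\<in>X. Q x - q x)"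
    by (rule sum_mono)
  then show ?thesis
    using assms(3) unfolding shannon_entropy_def sum_subtractf by linarith
qed

section \<open>Discrete divergences of product laws\<close>

definition discrete_kl :: "'x set \<Rightarrow> ('x \<Rightarrow> real) \<Rightarrow> ('x \<Rightarrow> real) \<Rightarrow> real" where
  "discrete_kl X P Q = (\<Sum>x\<in>X. P x * ln (P x / Q x))"

lemma abs_mult_ln_le_1:
  fixes t :: real
  assumes "0 < t" "t \<le> 1"
  shows "\<bar>t * ln t\<bar> \<le> 1"
proof -
  have "ln (1 / t) \<le> 1 / t - 1" using assms by (intro ln_le_minus_one) auto
  then have "t * (- ln t) \<le> t * (1 / t - 1)" using assms by (intro mult_left_mono) (auto simp: ln_div)
  also have "\<dots> = 1 - t" using assms by (simp add: right_diff_distrib)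
  finally have "- (t * ln t) \<le> 1 - t" by simp
  moreover have "t * ln t \<le> 0" using assms by (simp add: mult_nonneg_nonpos)
  ultimately show ?thesis using assms unfolding abs_le_iff by linarith
qed

lemma discrete_kl_eq_cross_entropy_minus_entropy:
  assumes "\<And>x. x \<in> X \<Longrightarrow> P x > 0" "\<And>x. x \<in> X \<Longrightarrow> Q x > 0"
  shows "discrete_kl X P Q = - (\<Sum>x\<in>X. P x * ln (Q x)) - shannon_entropy X P"
proof -
  have "P x * ln (P x / Q x) = P x * ln (P x) - P x * ln (Q x)" if "x \<in> X" for x
    using assms[OF that] by (simp add: ln_div right_diff_distrib)
  then show ?thesis
    unfolding discrete_kl_def shannon_entropy_def by (simp add: sum_subtractf)
qed

lemma discrete_kl_mixture_le:
  fixes P :: "'x \<Rightarrow> real" and P' :: "'u \<Rightarrow> 'x \<Rightarrow> real"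
  assumes "finite R" "u \<in> R"
    and "\<And>x. x \<in> X \<Longrightarrow> 0 \<le> P x" "(\<Sum>x\<in>X. P x) = 1"
    and "\<And>v x. v \<in> R \<Longrightarrow> x \<in> X \<Longrightarrow> P' v x > 0"
  shows "discrete_kl X P (\<lambda>x. (\<Sum>v\<in>R. P' v x) / card R) \<le> ln (card R) + discrete_kl X P (P' u)"
proof -
  define N where "N = real (card R)"
  have N: "N > 0" using assms(1,2) unfolding N_def by (auto simp: card_gt_0_iff)
  have ln_bound: "ln (P x / ((\<Sum>v\<in>R. P' v x) / N)) \<le> ln N + ln (P x / P' u x)"
    if "x \<in> X" "P x > 0" for x
  proof -
    have pos: "P' u x > 0" using assms(5)[OF assms(2) that(1)] .
    have le: "P' u x \<le> (\<Sum>v\<in>R. P' v x)"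
      using assms(1,2,5) that(1) by (intro member_le_sum) (auto intro: less_imp_le)
    have "P x / ((\<Sum>v\<in>R. P' v x) / N) = N * (P x / (\<Sum>v\<in>R. P' v x))"
      by simp
    also have "\<dots> \<le> N * (P x / P' u x)"
      using N pos le that(2) by (intro mult_left_mono divide_left_mono) auto
    finally have "P x / ((\<Sum>v\<in>R. P' v x) / N) \<le> N * (P x / P' u x)" .
    then have "ln (P x / ((\<Sum>v\<in>R. P' v x) / N)) \<le> ln (N * (P x / P' u x))"
      using N pos le that(2) by (subst ln_le_cancel_iff) auto
    also have "\<dots> = ln N + ln (P x / P' u x)"
      using N pos that(2) by (intro ln_mult_pos) auto
    finally show ?thesis .
  qed
  have "P x * ln (P x / ((\<Sum>v\<in>R. P' v x) / N)) \<le> P x * (ln N + ln (P x / P' u x))"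
    if "x \<in> X" for x
  proof (cases "P x = 0")
    case False
    then show ?thesis using assms(3)[OF that] ln_bound[OF that] by (intro mult_left_mono) auto
  qed simp
  then have "discrete_kl X P (\<lambda>x. (\<Sum>v\<in>R. P' v x) / N) \<le> (\<Sum>x\<in>X. P x * (ln N + ln (P x / P' u x)))"
    unfolding discrete_kl_def by (rule sum_mono)
  also have "\<dots> = ln N * (\<Sum>x\<in>X. P x) + discrete_kl X P (P' u)"
    unfolding discrete_kl_def distrib_left sum.distrib sum_distrib_left by (simp only: mult.commute)
  also have "\<dots> = ln N + discrete_kl X P (P' u)"
    unfolding assms(4) by simp
  finally show ?thesis unfolding N_def .
qed

lemma sum_PiE_prod_mult_coord:
  fixes p :: "'d::finite \<Rightarrow> 'a \<Rightarrow> real"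
  assumes "finite A" "\<And>j. (\<Sum>b\<in>A. p j b) = 1"
  shows "(\<Sum>x\<in>PiE UNIV (\<lambda>_. A). (\<Prod>j\<in>UNIV. p j (x j)) * g (x i)) = (\<Sum>a\<in>A. p i a * g a)"
proof -
  define F where "F j b = p j b * (if j = i then g b else 1)" for j b
  have "(\<Sum>x\<in>PiE UNIV (\<lambda>_. A). (\<Prod>j\<in>UNIV. p j (x j)) * g (x i))
      = (\<Sum>x\<in>PiE UNIV (\<lambda>_. A). \<Prod>j\<in>UNIV. F j (x j))"
    unfolding F_def by (simp add: prod.distrib)
  also have "\<dots> = (\<Prod>j\<in>UNIV. \<Sum>b\<in>A. F j b)"
    using assms(1) by (intro prod_sum_PiE[symmetric]) auto
  also have "\<dots> = (\<Prod>j\<in>UNIV. if j = i then (\<Sum>a\<in>A. p i a * g a) else 1)"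
    by (intro prod.cong refl) (auto simp: F_def assms(2))
  finally show ?thesis by simp
qed

lemma sum_PiE_prod_mult_ln_prod:
  fixes p g :: "'d::finite \<Rightarrow> 'a \<Rightarrow> real"
  assumes "finite A" "\<And>j. (\<Sum>b\<in>A. p j b) = 1" "\<And>j b. b \<in> A \<Longrightarrow> g j b > 0"
  shows "(\<Sum>x\<in>PiE UNIV (\<lambda>_. A). (\<Prod>j\<in>UNIV. p j (x j)) * ln (\<Prod>j\<in>UNIV. g j (x j)))
       = (\<Sum>i\<in>UNIV. \<Sum>a\<in>A. p i a * ln (g i a))"
proof -
  have "ln (\<Prod>j\<in>UNIV. g j (x j)) = (\<Sum>i\<in>UNIV. ln (g i (x i)))" if "x \<in> PiE UNIV (\<lambda>_. A)" for x
    using that assms(3) by (intro ln_prod) (auto simp: PiE_iff less_imp_neq[symmetric])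
  then have "(\<Sum>x\<in>PiE UNIV (\<lambda>_. A). (\<Prod>j\<in>UNIV. p j (x j)) * ln (\<Prod>j\<in>UNIV. g j (x j)))
      = (\<Sum>x\<in>PiE UNIV (\<lambda>_. A). \<Sum>i\<in>UNIV. (\<Prod>j\<in>UNIV. p j (x j)) * ln (g i (x i)))"
    by (simp add: sum_distrib_left)
  also have "\<dots> = (\<Sum>i\<in>UNIV. \<Sum>x\<in>PiE UNIV (\<lambda>_. A). (\<Prod>j\<in>UNIV. p j (x j)) * ln (g i (x i)))"
    by (rule sum.swap)
  also have "\<dots> = (\<Sum>i\<in>UNIV. \<Sum>a\<in>A. p i a * ln (g i a))"
    using assms(1,2) by (intro sum.cong refl sum_PiE_prod_mult_coord)
  finally show ?thesis .
qed

lemma shannon_entropy_PiE_prod: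
  fixes p :: "'d::finite \<Rightarrow> 'a \<Rightarrow> real"
  assumes "finite A" "\<And>j. (\<Sum>b\<in>A. p j b) = 1" "\<And>j b. b \<in> A \<Longrightarrow> p j b > 0"
  shows "shannon_entropy (PiE UNIV (\<lambda>_. A)) (\<lambda>x. \<Prod>j\<in>UNIV. p j (x j))
       = - (\<Sum>i\<in>UNIV. \<Sum>a\<in>A. p i a * ln (p i a))"
  unfolding shannon_entropy_def using sum_PiE_prod_mult_ln_prod[OF assms] by (rule arg_cong)

lemma discrete_kl_PiE_prod:
  fixes p p' :: "'d::finite \<Rightarrow> 'a \<Rightarrow> real"
  assumes "finite A" "\<And>j. (\<Sum>b\<in>A. p j b) = 1"
    and "\<And>j b. b \<in> A \<Longrightarrow> p j b > 0" "\<And>j b. b \<in> A \<Longrightarrow> p' j b > 0"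
  shows "discrete_kl (PiE UNIV (\<lambda>_. A)) (\<lambda>x. \<Prod>j\<in>UNIV. p j (x j)) (\<lambda>x. \<Prod>j\<in>UNIV. p' j (x j))
       = (\<Sum>i\<in>UNIV. discrete_kl A (p i) (p' i))"
proof -
  have "discrete_kl (PiE UNIV (\<lambda>_. A)) (\<lambda>x. \<Prod>j\<in>UNIV. p j (x j)) (\<lambda>x. \<Prod>j\<in>UNIV. p' j (x j))
      = (\<Sum>x\<in>PiE UNIV (\<lambda>_. A). (\<Prod>j\<in>UNIV. p j (x j)) * ln (\<Prod>j\<in>UNIV. p j (x j) / p' j (x j)))"
    unfolding discrete_kl_def prod_dividef ..
  also have "\<dots> = (\<Sum>i\<in>UNIV. \<Sum>a\<in>A. p i a * ln (p i a / p' i a))"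
    by (rule sum_PiE_prod_mult_ln_prod) (use assms in auto)
  finally show ?thesis unfolding discrete_kl_def .
qed

section \<open>Dual total correlation of a mixture of product laws\<close>

text \<open>Given \<omega>, the coordinates are independent with laws p \<omega> i; mixture is the law of x after
  averaging over \<omega>.\<close>
locale product_mixture = prob_space M
  for M :: "'w measure" and A :: "'a set" and p :: "'w \<Rightarrow> 'd::finite \<Rightarrow> 'a \<Rightarrow> real" +
  assumes finite_A: "finite A"
    and borel_measurable_p [measurable]: "\<And>i a. (\<lambda>\<omega>. p \<omega> i a) \<in> borel_measurable M"
    and p_pos: "\<And>\<omega> i a. \<omega> \<in> space M \<Longrightarrow> a \<in> A \<Longrightarrow> p \<omega> i a > 0"
    and sum_p: "\<And>\<omega> i. \<omega> \<in> space M \<Longrightarrow> (\<Sum>a\<in>A. p \<omega> i a) = 1"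
begin

abbreviation outcomes :: "('d \<Rightarrow> 'a) set" where
  "outcomes \<equiv> PiE UNIV (\<lambda>_. A)"

definition prod_law :: "'w \<Rightarrow> ('d \<Rightarrow> 'a) \<Rightarrow> real" where
  "prod_law \<omega> x = (\<Prod>j\<in>UNIV. p \<omega> j (x j))"

definition prod_law_minus :: "'w \<Rightarrow> 'd \<Rightarrow> ('d \<Rightarrow> 'a) \<Rightarrow> real" where
  "prod_law_minus \<omega> i x = (\<Prod>j\<in>UNIV - {i}. p \<omega> j (x j))"

definition mixture :: "('d \<Rightarrow> 'a) \<Rightarrow> real" where
  "mixture x = (\<integral>\<omega>. prod_law \<omega> x \<partial>M)"

lemma p_le_1: "\<omega> \<in> space M \<Longrightarrow> a \<in> A \<Longrightarrow> p \<omega> i a \<le> 1"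
  using member_le_sum[of a A "p \<omega> i"] finite_A p_pos sum_p by (force intro: less_imp_le)

lemma prod_law_pos: "\<omega> \<in> space M \<Longrightarrow> x \<in> outcomes \<Longrightarrow> prod_law \<omega> x > 0"
  unfolding prod_law_def by (intro prod_pos) (auto simp: PiE_iff p_pos)

lemma prod_law_le_1: "\<omega> \<in> space M \<Longrightarrow> x \<in> outcomes \<Longrightarrow> prod_law \<omega> x \<le> 1"
  unfolding prod_law_def by (intro prod_le_1) (auto simp: PiE_iff p_le_1 p_pos less_imp_le)

lemma prod_law_minus_pos: "\<omega> \<in> space M \<Longrightarrow> x \<in> outcomes \<Longrightarrow> prod_law_minus \<omega> i x > 0"
  unfolding prod_law_minus_def by (intro prod_pos) (auto simp: PiE_iff p_pos)

lemma prod_law_minus_le_1: "\<omega> \<in> space M \<Longrightarrow> x \<in> outcomes \<Longrightarrow> prod_law_minus \<omega> i x \<le> 1"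
  unfolding prod_law_minus_def by (intro prod_le_1) (auto simp: PiE_iff p_le_1 p_pos less_imp_le)

lemma prod_law_split: "prod_law \<omega> x = p \<omega> i (x i) * prod_law_minus \<omega> i x"
  unfolding prod_law_def prod_law_minus_def by (rule prod.remove) auto

lemma sum_prod_law: "\<omega> \<in> space M \<Longrightarrow> (\<Sum>x\<in>outcomes. prod_law \<omega> x) = 1"
  unfolding prod_law_def using prod_sum_PiE[of UNIV "\<lambda>_. A" "p \<omega>"] finite_A sum_p by simp

lemma sum_fiber_prod_law:
  assumes "\<omega> \<in> space M" "x \<in> outcomes"
  shows "(\<Sum>y\<in>{y\<in>outcomes. \<forall>j. j \<noteq> i \<longrightarrow> y j = x j}. prod_law \<omega> y) = prod_law_minus \<omega> i x"
proof -
  have fiber: "{y\<in>outcomes. \<forall>j. j \<noteq> i \<longrightarrow> y j = x j} = (\<lambda>a. x(i := a)) ` A"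
  proof (intro set_eqI iffI)
    fix y assume "y \<in> {y\<in>outcomes. \<forall>j. j \<noteq> i \<longrightarrow> y j = x j}"
    then have "y = x(i := y i)" "y i \<in> A" by (auto simp: PiE_iff)
    then show "y \<in> (\<lambda>a. x(i := a)) ` A" by blast
  qed (use assms(2) in \<open>auto simp: PiE_iff\<close>)
  have "inj_on (\<lambda>a. x(i := a)) A"
    by (rule inj_onI) (metis fun_upd_same)
  then have "(\<Sum>y\<in>{y\<in>outcomes. \<forall>j. j \<noteq> i \<longrightarrow> y j = x j}. prod_law \<omega> y)
      = (\<Sum>a\<in>A. p \<omega> i a * prod_law_minus \<omega> i (x(i := a)))"
    unfolding fiber by (simp add: sum.reindex prod_law_split[where i = i])
  also have "\<dots> = (\<Sum>a\<in>A. p \<omega> i a) * prod_law_minus \<omega> i x"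
    unfolding prod_law_minus_def sum_distrib_right
    by (intro sum.cong refl arg_cong2[where f = times] prod.cong) auto
  finally show ?thesis using sum_p[OF assms(1)] by simp
qed

lemma integrable_bounded:
  fixes g :: "'w \<Rightarrow> real"
  assumes "g \<in> borel_measurable M" "\<And>\<omega>. \<omega> \<in> space M \<Longrightarrow> \<bar>g \<omega>\<bar> \<le> 1"
  shows "integrable M g"
proof (rule integrable_const_bound[where B = 1])
  show "AE \<omega> in M. norm (g \<omega>) \<le> 1" using assms(2) by (intro AE_I2) simp
qed (rule assms(1))

lemma integrable_prod_law:
  assumes "x \<in> outcomes"
  shows "integrable M (\<lambda>\<omega>. prod_law \<omega> x)"
proof (rule integrable_bounded)
  show "\<bar>prod_law \<omega> x\<bar> \<le> 1" if "\<omega> \<in> space M" for \<omega>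
    using prod_law_pos[OF that assms] prod_law_le_1[OF that assms] by simp
qed (unfold prod_law_def, measurable)

lemma integrable_prod_law_minus:
  assumes "x \<in> outcomes"
  shows "integrable M (\<lambda>\<omega>. prod_law_minus \<omega> i x)"
proof (rule integrable_bounded)
  show "\<bar>prod_law_minus \<omega> i x\<bar> \<le> 1" if "\<omega> \<in> space M" for \<omega>
    using prod_law_minus_pos[OF that assms, of i] prod_law_minus_le_1[OF that assms, of i] by simp
qed (unfold prod_law_minus_def, measurable)

lemma integrable_prod_law_ln_p:
  assumes "x \<in> outcomes"
  shows "integrable M (\<lambda>\<omega>. prod_law \<omega> x * ln (p \<omega> i (x i)))"
proof (rule integrable_bounded)
  fix \<omega> assume \<omega>: "\<omega> \<in> space M"
  have xi: "x i \<in> A" using assms by (auto simp: PiE_iff)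
  have "\<bar>prod_law \<omega> x * ln (p \<omega> i (x i))\<bar> = prod_law_minus \<omega> i x * \<bar>p \<omega> i (x i) * ln (p \<omega> i (x i))\<bar>"
    using prod_law_minus_pos[OF \<omega> assms, of i] by (simp add: prod_law_split[where i = i] abs_mult)
  also have "\<dots> \<le> 1 * 1"
    using prod_law_minus_pos[OF \<omega> assms] prod_law_minus_le_1[OF \<omega> assms]
      abs_mult_ln_le_1[OF p_pos[OF \<omega> xi] p_le_1[OF \<omega> xi]]
    by (intro mult_mono) auto
  finally show "\<bar>prod_law \<omega> x * ln (p \<omega> i (x i))\<bar> \<le> 1" by simp
qed (unfold prod_law_def, measurable)

lemma mixture_pos: "x \<in> outcomes \<Longrightarrow> mixture x > 0"
  unfolding mixture_def
  by (rule integral_pos_if_pos_on[where A = "space M"])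
    (auto simp: integrable_prod_law prod_law_pos less_imp_le emeasure_space_1)

lemma sum_mixture: "(\<Sum>x\<in>outcomes. mixture x) = 1"
proof -
  have "(\<Sum>x\<in>outcomes. mixture x) = (\<integral>\<omega>. (\<Sum>x\<in>outcomes. prod_law \<omega> x) \<partial>M)"
    unfolding mixture_def using integrable_prod_law by (subst Bochner_Integration.integral_sum) auto
  also have "\<dots> = (\<integral>\<omega>. 1 \<partial>M)"
    by (intro Bochner_Integration.integral_cong) (auto simp: sum_prod_law)
  finally show ?thesis by (simp add: prob_space)
qed

lemma marg_minus_mixture:
  assumes "x \<in> outcomes"
  shows "marg_minus outcomes mixture i x = (\<integral>\<omega>. prod_law_minus \<omega> i x \<partial>M)"
proof -
  have "marg_minus outcomes mixture i x
      = (\<integral>\<omega>. (\<Sum>y\<in>{y\<in>outcomes. \<forall>j. j \<noteq> i \<longrightarrow> y j = x j}. prod_law \<omega> y) \<partial>M)"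
    unfolding marg_minus_def mixture_def using integrable_prod_law
    by (subst Bochner_Integration.integral_sum) auto
  also have "\<dots> = (\<integral>\<omega>. prod_law_minus \<omega> i x \<partial>M)"
    using assms by (intro Bochner_Integration.integral_cong) (auto simp: sum_fiber_prod_law)
  finally show ?thesis .
qed

lemma prod_law_div_prod_law_minus:
  "\<omega> \<in> space M \<Longrightarrow> x \<in> outcomes \<Longrightarrow> prod_law \<omega> x / prod_law_minus \<omega> i x = p \<omega> i (x i)"
  using prod_law_minus_pos[of \<omega> x i] by (simp add: prod_law_split[where i = i])

lemma integrable_p_ln_p: "a \<in> A \<Longrightarrow> integrable M (\<lambda>\<omega>. p \<omega> i a * ln (p \<omega> i a))"
  by (rule integrable_bounded) (auto intro: abs_mult_ln_le_1 p_pos p_le_1)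

text \<open>The log-sum inequality over \<omega>: prod_law and prod_law_minus integrate to the laws of x and
  x^{-i} under the mixture, and their ratio is p \<omega> i (x i).\<close>
lemma mixture_ln_ratio_le:
  assumes "x \<in> outcomes"
  shows "mixture x * ln (mixture x / marg_minus outcomes mixture i x)
           \<le> (\<integral>\<omega>. prod_law \<omega> x * ln (p \<omega> i (x i)) \<partial>M)"
proof -
  have "mixture x * ln (mixture x / marg_minus outcomes mixture i x)
      \<le> (\<integral>\<omega>. prod_law \<omega> x * ln (prod_law \<omega> x / prod_law_minus \<omega> i x) \<partial>M)"
    unfolding marg_minus_mixture[OF assms] mixture_def
  proof (rule log_sum_integral)
    have "integrable M (\<lambda>\<omega>. prod_law \<omega> x * ln (prod_law \<omega> x / prod_law_minus \<omega> i x))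
        \<longleftrightarrow> integrable M (\<lambda>\<omega>. prod_law \<omega> x * ln (p \<omega> i (x i)))"
      using assms by (intro Bochner_Integration.integrable_cong) (simp_all add: prod_law_div_prod_law_minus)
    then show "integrable M (\<lambda>\<omega>. prod_law \<omega> x * ln (prod_law \<omega> x / prod_law_minus \<omega> i x))"
      using integrable_prod_law_ln_p[OF assms] by simp
    show "(\<integral>\<omega>. prod_law \<omega> x \<partial>M) > 0"
      using mixture_pos[OF assms] unfolding mixture_def .
    show "(\<integral>\<omega>. prod_law_minus \<omega> i x \<partial>M) > 0"
      by (rule integral_pos_if_pos_on[where A = "space M"])
        (auto simp: integrable_prod_law_minus assms prod_law_minus_pos less_imp_le emeasure_space_1)
    show "0 \<le> prod_law \<omega> x \<and> 0 \<le> prod_law_minus \<omega> i x \<and> (prod_law_minus \<omega> i x = 0 \<longrightarrow> prod_law \<omega> x = 0)"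
      if "\<omega> \<in> space M" for \<omega>
      using prod_law_pos[OF that assms] prod_law_minus_pos[OF that assms, of i] by simp
  qed (use assms in \<open>simp_all add: integrable_prod_law integrable_prod_law_minus\<close>)
  also have "\<dots> = (\<integral>\<omega>. prod_law \<omega> x * ln (p \<omega> i (x i)) \<partial>M)"
    using assms by (intro Bochner_Integration.integral_cong) (simp_all add: prod_law_div_prod_law_minus)
  finally show ?thesis .
qed

text \<open>Concavity of conditional entropy: under a product law, the conditional entropy of x^i given
  x^{-i} is just the entropy of p \<omega> i.\<close>
lemma cond_entropy_coord_mixture_ge:
  "(\<integral>\<omega>. - (\<Sum>a\<in>A. p \<omega> i a * ln (p \<omega> i a)) \<partial>M) \<le> cond_entropy_coord outcomes mixture i"
proof -
  have "(\<Sum>x\<in>outcomes. mixture x * ln (mixture x / marg_minus outcomes mixture i x))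
      \<le> (\<Sum>x\<in>outcomes. \<integral>\<omega>. prod_law \<omega> x * ln (p \<omega> i (x i)) \<partial>M)"
    by (intro sum_mono mixture_ln_ratio_le)
  also have "\<dots> = (\<integral>\<omega>. (\<Sum>x\<in>outcomes. prod_law \<omega> x * ln (p \<omega> i (x i))) \<partial>M)"
    using integrable_prod_law_ln_p by (subst Bochner_Integration.integral_sum) auto
  also have "\<dots> = (\<integral>\<omega>. (\<Sum>a\<in>A. p \<omega> i a * ln (p \<omega> i a)) \<partial>M)"
    unfolding prod_law_def
    by (intro Bochner_Integration.integral_cong refl sum_PiE_prod_mult_coord finite_A sum_p)
  finally show ?thesis unfolding cond_entropy_coord_def by simp
qed

theorem dual_total_correlation_mixture_le:
  assumes Q_pos: "\<And>x. x \<in> outcomes \<Longrightarrow> Q x > 0" and Q_sum: "(\<Sum>x\<in>outcomes. Q x) \<le> 1"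
    and kl_le: "\<And>\<omega>. \<omega> \<in> space M \<Longrightarrow> discrete_kl outcomes (prod_law \<omega>) Q \<le> C"
  shows "dual_total_correlation outcomes mixture \<le> C"
proof -
  define cross where "cross \<omega> = - (\<Sum>x\<in>outcomes. prod_law \<omega> x * ln (Q x))" for \<omega>
  define H where "H \<omega> i = - (\<Sum>a\<in>A. p \<omega> i a * ln (p \<omega> i a))" for \<omega> i
  have int_cross: "integrable M cross"
    unfolding cross_def
    by (intro integrable_minus Bochner_Integration.integrable_sum integrable_mult_left integrable_prod_law)
  have int_H: "integrable M (\<lambda>\<omega>. H \<omega> i)" for i
    unfolding H_def by (intro integrable_minus Bochner_Integration.integrable_sum integrable_p_ln_p)
  have "shannon_entropy outcomes mixture \<le> - (\<Sum>x\<in>outcomes. mixture x * ln (Q x))"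
    using mixture_pos Q_pos Q_sum sum_mixture
    by (intro shannon_entropy_le_cross_entropy) (auto simp: less_imp_le)
  moreover have "(\<Sum>i\<in>UNIV. \<integral>\<omega>. H \<omega> i \<partial>M) \<le> (\<Sum>i\<in>UNIV. cond_entropy_coord outcomes mixture i)"
    unfolding H_def by (intro sum_mono cond_entropy_coord_mixture_ge)
  ultimately have "dual_total_correlation outcomes mixture
      \<le> - (\<Sum>x\<in>outcomes. mixture x * ln (Q x)) - (\<Sum>i\<in>UNIV. \<integral>\<omega>. H \<omega> i \<partial>M)"
    unfolding dual_total_correlation_def by linarith
  also have "\<dots> = (\<integral>\<omega>. cross \<omega> - (\<Sum>i\<in>UNIV. H \<omega> i) \<partial>M)"
    using int_cross int_H unfolding cross_def mixture_def
    by (simp add: Bochner_Integration.integral_sum integrable_prod_law)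
  also have "\<dots> \<le> (\<integral>\<omega>. C \<partial>M)"
  proof (rule integral_mono)
    fix \<omega> assume \<omega>: "\<omega> \<in> space M"
    have "discrete_kl outcomes (prod_law \<omega>) Q = cross \<omega> - shannon_entropy outcomes (prod_law \<omega>)"
      unfolding cross_def using \<omega> Q_pos prod_law_pos
      by (intro discrete_kl_eq_cross_entropy_minus_entropy) auto
    also have "shannon_entropy outcomes (prod_law \<omega>) = (\<Sum>i\<in>UNIV. H \<omega> i)"
      unfolding prod_law_def H_def using \<omega> finite_A sum_p p_pos
      by (subst shannon_entropy_PiE_prod) (auto simp: sum_negf)
    finally show "cross \<omega> - (\<Sum>i\<in>UNIV. H \<omega> i) \<le> C" using kl_le[OF \<omega>] by simp
  qed (use int_cross int_H in auto)
  finally show ?thesis by (simp add: prob_space)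
qed

end

section \<open>Quantised Gaussians\<close>

definition clip_floor :: "nat \<Rightarrow> real \<Rightarrow> nat" where
  "clip_floor S t = nat (min (max \<lfloor>t\<rfloor> 0) (int S))"

definition quant_cell :: "nat \<Rightarrow> nat \<Rightarrow> real set" where
  "quant_cell S a = clip_floor S -` {a}"

definition gauss_cell_prob :: "real \<Rightarrow> nat \<Rightarrow> real \<Rightarrow> nat \<Rightarrow> real" where
  "gauss_cell_prob \<sigma> S w a = (\<integral>s. indicator (quant_cell S a) s * normal_density w \<sigma> s \<partial>lborel)"

lemma quant_eq_iff: "quant S y = x \<longleftrightarrow> (\<forall>i. y $ i \<in> quant_cell S (x i))"
  unfolding quant_def quant_cell_def clip_floor_def by (auto simp: fun_eq_iff)

lemma measurable_clip_floor [measurable]: "clip_floor S \<in> measurable borel (count_space UNIV)"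
  unfolding clip_floor_def by measurable

lemma sets_quant_cell [measurable]: "quant_cell S a \<in> sets borel"
  using measurable_sets[OF measurable_clip_floor, of "{a}"] by (simp add: quant_cell_def)

lemma sum_indicator_quant_cell: "(\<Sum>a\<in>{0..S}. indicator (quant_cell S a) t) = (1::real)"
proof -
  have "clip_floor S t \<le> S" unfolding clip_floor_def by auto
  then show ?thesis
    unfolding quant_cell_def by (simp add: indicator_def sum.delta[of "{0..S}" "clip_floor S t"])
qed

lemma quant_cell_superset: "a \<le> S \<Longrightarrow> {real a..<real a + 1} \<subseteq> quant_cell S a"
proof
  fix t assume "a \<le> S" "t \<in> {real a..<real a + 1}"
  moreover from this have "\<lfloor>t\<rfloor> = int a" by (simp add: floor_eq_iff)
  ultimately show "t \<in> quant_cell S a" by (simp add: quant_cell_def clip_floor_def)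
qed

lemma integrable_quant_cell_normal_density:
  assumes "\<sigma> > 0"
  shows "integrable lborel (\<lambda>s. indicator (quant_cell S a) s * normal_density w \<sigma> s)"
  using integrable_mult_indicator[of "quant_cell S a" lborel, OF _ integrable_normal_density[OF assms]]
  by simp

lemma gauss_cell_prob_nonneg: "gauss_cell_prob \<sigma> S w a \<ge> 0"
  unfolding gauss_cell_prob_def by (intro integral_nonneg_AE) (simp add: normal_density_nonneg)

lemma gauss_cell_prob_pos:
  assumes "\<sigma> > 0" "a \<le> S"
  shows "gauss_cell_prob \<sigma> S w a > 0"
  unfolding gauss_cell_prob_def
proof (rule integral_pos_if_pos_on[where A = "{real a..<real a + 1}"])
  show "indicator (quant_cell S a) s * normal_density w \<sigma> s > 0" if "s \<in> {real a..<real a + 1}" for s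
    using that quant_cell_superset[OF assms(2)] normal_density_pos[OF assms(1)] by auto
qed (use assms in \<open>auto simp: integrable_quant_cell_normal_density normal_density_nonneg\<close>)

lemma sum_gauss_cell_prob:
  assumes "\<sigma> > 0"
  shows "(\<Sum>a\<in>{0..S}. gauss_cell_prob \<sigma> S w a) = 1"
proof -
  have "(\<Sum>a\<in>{0..S}. gauss_cell_prob \<sigma> S w a)
      = (\<integral>s. (\<Sum>a\<in>{0..S}. indicator (quant_cell S a) s) * normal_density w \<sigma> s \<partial>lborel)"
    unfolding gauss_cell_prob_def sum_distrib_right
    using integrable_quant_cell_normal_density[OF assms] by (subst Bochner_Integration.integral_sum) auto
  also have "\<dots> = 1"
    using integral_normal_density[OF assms] by (simp add: sum_indicator_quant_cell)
  finally show ?thesis .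
qed

lemma gauss_cell_prob_le_1:
  assumes "\<sigma> > 0"
  shows "gauss_cell_prob \<sigma> S w a \<le> 1"
proof -
  have "gauss_cell_prob \<sigma> S w a \<le> (\<integral>s. normal_density w \<sigma> s \<partial>lborel)"
    unfolding gauss_cell_prob_def using assms
    by (intro integral_mono integrable_quant_cell_normal_density integrable_normal_density)
      (auto simp: indicator_def normal_density_nonneg)
  then show ?thesis using integral_normal_density[OF assms] by simp
qed

lemma borel_measurable_gauss_cell_prob [measurable]:
  "(\<lambda>w. gauss_cell_prob \<sigma> S w a) \<in> borel_measurable borel"
  unfolding gauss_cell_prob_def normal_density_def
  by (rule sigma_finite_measure.borel_measurable_lebesgue_integral[OF sigma_finite_lborel]) measurable

lemma gauss_cell_prob_eq_nn_integral:
  assumes "\<sigma> > 0"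
  shows "ennreal (gauss_cell_prob \<sigma> S w a)
    = (\<integral>\<^sup>+t. ennreal (normal_density 0 \<sigma> t * indicator (quant_cell S a) (w + t)) \<partial>lborel)"
proof -
  have "ennreal (gauss_cell_prob \<sigma> S w a)
      = (\<integral>\<^sup>+s. ennreal (indicator (quant_cell S a) s * normal_density w \<sigma> s) \<partial>lborel)"
    unfolding gauss_cell_prob_def using integrable_quant_cell_normal_density[OF assms]
    by (subst nn_integral_eq_integral) (auto simp: normal_density_nonneg)
  also have "\<dots> = (\<integral>\<^sup>+t. ennreal (indicator (quant_cell S a) (w + t) * normal_density w \<sigma> (w + t)) \<partial>lborel)"
    using nn_integral_real_affine[where c = 1 and t = w
        and f = "\<lambda>s. ennreal (indicator (quant_cell S a) s * normal_density w \<sigma> s)"] by simp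
  finally show ?thesis
    by (simp add: normal_density_def mult.commute)
qed

lemma ln_normal_density_ratio:
  assumes "\<sigma> > 0"
  shows "ln (normal_density w \<sigma> s / normal_density w' \<sigma> s)
       = (w - w') / \<sigma>\<^sup>2 * s - (w - w') * (w + w') / (2 * \<sigma>\<^sup>2)"
proof -
  have "normal_density w \<sigma> s / normal_density w' \<sigma> s
      = exp (- (s - w)\<^sup>2 / (2 * \<sigma>\<^sup>2)) / exp (- (s - w')\<^sup>2 / (2 * \<sigma>\<^sup>2))"
    using assms by (simp add: normal_density_def)
  then have "ln (normal_density w \<sigma> s / normal_density w' \<sigma> s)
      = - (s - w)\<^sup>2 / (2 * \<sigma>\<^sup>2) - (- (s - w')\<^sup>2 / (2 * \<sigma>\<^sup>2))"
    by (simp add: ln_div)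
  then show ?thesis
    using assms by (simp add: field_simps power2_eq_square)
qed

lemma integral_normal_density_ln_ratio:
  assumes "\<sigma> > 0"
  shows "(\<integral>s. normal_density w \<sigma> s * ln (normal_density w \<sigma> s / normal_density w' \<sigma> s) \<partial>lborel)
       = (w - w')\<^sup>2 / (2 * \<sigma>\<^sup>2)"
    and "integrable lborel (\<lambda>s. normal_density w \<sigma> s * ln (normal_density w \<sigma> s / normal_density w' \<sigma> s))"
proof -
  define c1 c0 where "c1 = (w - w') / \<sigma>\<^sup>2" and "c0 = (w - w') * (w + w') / (2 * \<sigma>\<^sup>2)"
  have eq: "normal_density w \<sigma> s * ln (normal_density w \<sigma> s / normal_density w' \<sigma> s)
      = c1 * (normal_density w \<sigma> s * s) - c0 * normal_density w \<sigma> s" for s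
    unfolding ln_normal_density_ratio[OF assms] c1_def c0_def by (simp add: algebra_simps)
  note moments = integrable_normal_moment_nz_1[OF assms] integrable_normal_density[OF assms]
    integral_normal_moment_nz_1[OF assms] integral_normal_density[OF assms]
  show "integrable lborel (\<lambda>s. normal_density w \<sigma> s * ln (normal_density w \<sigma> s / normal_density w' \<sigma> s))"
    unfolding eq using moments by simp
  have "(\<integral>s. normal_density w \<sigma> s * ln (normal_density w \<sigma> s / normal_density w' \<sigma> s) \<partial>lborel)
      = c1 * w - c0"
    unfolding eq using moments by simp
  also have "\<dots> = (w - w')\<^sup>2 / (2 * \<sigma>\<^sup>2)"
    using assms unfolding c1_def c0_def by (simp add: field_simps power2_eq_square)
  finally show "(\<integral>s. normal_density w \<sigma> s * ln (normal_density w \<sigma> s / normal_density w' \<sigma> s) \<partial>lborel)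
       = (w - w')\<^sup>2 / (2 * \<sigma>\<^sup>2)" .
qed

lemma integrable_quant_cell_normal_density_ln_ratio:
  assumes "\<sigma> > 0"
  shows "integrable lborel (\<lambda>s. indicator (quant_cell S a) s
           * (normal_density w \<sigma> s * ln (normal_density w \<sigma> s / normal_density w' \<sigma> s)))"
  using integrable_mult_indicator[of "quant_cell S a" lborel,
      OF _ integral_normal_density_ln_ratio(2)[OF assms]]
  by simp

lemma gauss_cell_prob_ln_ratio_le:
  assumes "\<sigma> > 0" "a \<le> S"
  shows "gauss_cell_prob \<sigma> S w a * ln (gauss_cell_prob \<sigma> S w a / gauss_cell_prob \<sigma> S w' a)
    \<le> (\<integral>s. indicator (quant_cell S a) s
         * (normal_density w \<sigma> s * ln (normal_density w \<sigma> s / normal_density w' \<sigma> s)) \<partial>lborel)"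
    (is "_ \<le> (\<integral>s. ?g s \<partial>lborel)")
proof -
  let ?a = "\<lambda>s. indicator (quant_cell S a) s * normal_density w \<sigma> s"
  let ?b = "\<lambda>s. indicator (quant_cell S a) s * normal_density w' \<sigma> s"
  have eq: "?a s * ln (?a s / ?b s) = ?g s" for s
    by (simp add: indicator_def)
  have "gauss_cell_prob \<sigma> S w a * ln (gauss_cell_prob \<sigma> S w a / gauss_cell_prob \<sigma> S w' a)
      \<le> (\<integral>s. ?a s * ln (?a s / ?b s) \<partial>lborel)"
    unfolding gauss_cell_prob_def
  proof (rule log_sum_integral)
    show "integrable lborel (\<lambda>s. ?a s * ln (?a s / ?b s))"
      unfolding eq by (rule integrable_quant_cell_normal_density_ln_ratio[OF assms(1)])
    show "0 \<le> ?a t \<and> 0 \<le> ?b t \<and> (?b t = 0 \<longrightarrow> ?a t = 0)" for t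
      using normal_density_pos[OF assms(1), of w t] normal_density_pos[OF assms(1), of w' t]
      by (simp add: indicator_def)
    show "0 < integral\<^sup>L lborel ?a" "0 < integral\<^sup>L lborel ?b"
      using gauss_cell_prob_pos[OF assms] unfolding gauss_cell_prob_def by auto
  qed (rule integrable_quant_cell_normal_density[OF assms(1)])+
  then show ?thesis unfolding eq .
qed

text \<open>Quantisation can only decrease the divergence between the Gaussians N(w, \<sigma>^2)
  and N(w', \<sigma>^2), which is (w - w')^2 / (2 \<sigma>^2).\<close>
lemma gauss_cell_prob_kl_le:
  assumes "\<sigma> > 0"
  shows "discrete_kl {0..S} (gauss_cell_prob \<sigma> S w) (gauss_cell_prob \<sigma> S w') \<le> (w - w')\<^sup>2 / (2 * \<sigma>\<^sup>2)"
proof -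
  define g where "g s = normal_density w \<sigma> s * ln (normal_density w \<sigma> s / normal_density w' \<sigma> s)" for s
  have "discrete_kl {0..S} (gauss_cell_prob \<sigma> S w) (gauss_cell_prob \<sigma> S w')
      \<le> (\<Sum>a\<in>{0..S}. \<integral>s. indicator (quant_cell S a) s * g s \<partial>lborel)"
    unfolding discrete_kl_def g_def using assms
    by (intro sum_mono gauss_cell_prob_ln_ratio_le) auto
  also have "\<dots> = (\<integral>s. (\<Sum>a\<in>{0..S}. indicator (quant_cell S a) s) * g s \<partial>lborel)"
    unfolding sum_distrib_right g_def using integrable_quant_cell_normal_density_ln_ratio[OF assms]
    by (subst Bochner_Integration.integral_sum) auto
  also have "\<dots> = (w - w')\<^sup>2 / (2 * \<sigma>\<^sup>2)"
    unfolding sum_indicator_quant_cell g_def using integral_normal_density_ln_ratio(1)[OF assms] by simp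
  finally show ?thesis .
qed

definition quant_gauss_law :: "real \<Rightarrow> nat \<Rightarrow> real^'d \<Rightarrow> ('d \<Rightarrow> nat) \<Rightarrow> real" where
  "quant_gauss_law \<sigma> S w x = (\<Prod>i\<in>UNIV. gauss_cell_prob \<sigma> S (w $ i) (x i))"

lemma quant_gauss_law_pos:
  "\<sigma> > 0 \<Longrightarrow> x \<in> PiE UNIV (\<lambda>_. {0..S}) \<Longrightarrow> quant_gauss_law \<sigma> S w x > 0"
  unfolding quant_gauss_law_def by (intro prod_pos) (auto simp: PiE_iff gauss_cell_prob_pos)

lemma quant_gauss_law_nonneg: "quant_gauss_law \<sigma> S w x \<ge> 0"
  unfolding quant_gauss_law_def by (intro prod_nonneg) (simp add: gauss_cell_prob_nonneg)

lemma quant_gauss_law_le_1: "\<sigma> > 0 \<Longrightarrow> quant_gauss_law \<sigma> S w x \<le> 1"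
  unfolding quant_gauss_law_def by (intro prod_le_1) (simp_all add: gauss_cell_prob_nonneg gauss_cell_prob_le_1)

lemma sum_quant_gauss_law:
  fixes w :: "real^'d"
  assumes "\<sigma> > 0"
  shows "(\<Sum>x\<in>PiE UNIV (\<lambda>_. {0..S}). quant_gauss_law \<sigma> S w x) = 1"
  unfolding quant_gauss_law_def
  using prod_sum_PiE[of UNIV "\<lambda>_. {0..S}" "\<lambda>i. gauss_cell_prob \<sigma> S (w $ i)"]
  by (simp add: sum_gauss_cell_prob[OF assms])

lemma quant_gauss_law_kl_le:
  fixes w w' :: "real^'d"
  assumes "\<sigma> > 0"
  shows "discrete_kl (PiE UNIV (\<lambda>_. {0..S})) (quant_gauss_law \<sigma> S w) (quant_gauss_law \<sigma> S w')
       \<le> (norm (w - w'))\<^sup>2 / (2 * \<sigma>\<^sup>2)"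
proof -
  have "discrete_kl (PiE UNIV (\<lambda>_. {0..S})) (quant_gauss_law \<sigma> S w) (quant_gauss_law \<sigma> S w')
      = (\<Sum>i\<in>UNIV. discrete_kl {0..S} (gauss_cell_prob \<sigma> S (w $ i)) (gauss_cell_prob \<sigma> S (w' $ i)))"
    unfolding quant_gauss_law_def[abs_def] using assms
    by (intro discrete_kl_PiE_prod) (auto simp: sum_gauss_cell_prob gauss_cell_prob_pos)
  also have "\<dots> \<le> (\<Sum>i\<in>UNIV. (w $ i - w' $ i)\<^sup>2 / (2 * \<sigma>\<^sup>2))"
    by (intro sum_mono gauss_cell_prob_kl_le assms)
  also have "\<dots> = (norm (w - w'))\<^sup>2 / (2 * \<sigma>\<^sup>2)"
    unfolding sum_divide_distrib[symmetric] norm_vec_def L2_set_def by (simp add: sum_nonneg)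
  finally show ?thesis .
qed

section \<open>A reference law from a grid cover\<close>

lemma min_nat_floor_bounds:
  fixes s :: real and n :: nat
  assumes "n \<ge> 1" "0 \<le> s" "s \<le> real n"
  shows "real (min (n - 1) (nat \<lfloor>s\<rfloor>)) \<le> s \<and> s \<le> real (min (n - 1) (nat \<lfloor>s\<rfloor>)) + 1"
proof (cases "nat \<lfloor>s\<rfloor> \<le> n - 1")
  case True
  then show ?thesis using assms by (simp add: min_def)
next
  case False
  then show ?thesis using assms by (simp add: min_def of_nat_diff) linarith
qed

lemma sq_norm_le_of_coords_le:
  fixes v :: "real^'k" and c :: real
  assumes "\<And>i. \<bar>v $ i\<bar> \<le> c"
  shows "(norm v)\<^sup>2 \<le> CARD('k) * c\<^sup>2"
proof -
  have "(norm v)\<^sup>2 = (\<Sum>i\<in>UNIV. (v $ i)\<^sup>2)"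
    unfolding norm_vec_def L2_set_def by (simp add: sum_nonneg)
  also have "\<dots> \<le> (\<Sum>i\<in>(UNIV::'k set). c\<^sup>2)"
    using assms by (intro sum_mono) (metis abs_le_square_iff abs_of_nonneg abs_ge_zero order_trans)
  finally show ?thesis by simp
qed

lemma bounded_coordinate_range:
  fixes Z :: "(real^'k) set"
  assumes "bounded Z" "Z \<noteq> {}"
  obtains m where "\<And>v i. v \<in> Z \<Longrightarrow> m i \<le> v $ i \<and> v $ i \<le> m i + diameter Z"
proof
  fix v i assume v: "v \<in> Z"
  have bdd: "bdd_below ((\<lambda>u. u $ i) ` Z)"
    using bounded_component_cart[OF assms(1)] by (rule bounded_imp_bdd_below)
  have "v $ i - diameter Z \<le> u $ i" if "u \<in> Z" for u
  proof -
    have "v $ i - u $ i \<le> norm (v - u)"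
      using component_le_norm_cart[of "v - u" i] by simp
    also have "\<dots> \<le> diameter Z"
      using diameter_bounded_bound[OF assms(1) v that] by (simp add: dist_norm)
    finally show ?thesis by simp
  qed
  then have "v $ i - diameter Z \<le> Inf ((\<lambda>u. u $ i) ` Z)"
    using assms(2) by (intro cInf_greatest) auto
  moreover have "Inf ((\<lambda>u. u $ i) ` Z) \<le> v $ i"
    using bdd v by (intro cInf_lower) auto
  ultimately show "Inf ((\<lambda>u. u $ i) ` Z) \<le> v $ i \<and> v $ i \<le> Inf ((\<lambda>u. u $ i) ` Z) + diameter Z"
    by simp
qed

lemma same_grid_cell_dist_le:
  fixes a b m D :: real and n :: nat
  assumes "n > 0" "D > 0" "a \<in> {m..m + D}" "b \<in> {m..m + D}"
    and "min (n - 1) (nat \<lfloor>(a - m) * n / D\<rfloor>) = min (n - 1) (nat \<lfloor>(b - m) * n / D\<rfloor>)"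
  shows "\<bar>a - b\<bar> \<le> D / n"
proof -
  define s where "s x = (x - m) * n / D" for x
  have bounds: "real (min (n - 1) (nat \<lfloor>s x\<rfloor>)) \<le> s x \<and> s x \<le> real (min (n - 1) (nat \<lfloor>s x\<rfloor>)) + 1"
    if "x \<in> {m..m + D}" for x
  proof (rule min_nat_floor_bounds)
    have "(x - m) * n \<le> D * n" using that by (intro mult_right_mono) auto
    then show "0 \<le> s x" "s x \<le> n"
      using that assms(2) unfolding s_def by (simp_all add: pos_divide_le_eq mult.commute)
  qed (use assms(1) in simp)
  have "\<bar>s a - s b\<bar> \<le> 1"
    using bounds[OF assms(3)] bounds[OF assms(4)] assms(5) unfolding s_def abs_le_iff by linarith
  moreover have "a - b = (s a - s b) * D / n"
    unfolding s_def using assms(1,2) by (simp add: field_simps)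
  ultimately show ?thesis
    using assms(1,2) by (simp add: abs_mult divide_right_mono mult_left_le_one_le)
qed

lemma finite_image_representatives:
  assumes "idx ` Z \<subseteq> C" "finite C"
  obtains R where "finite R" "R \<subseteq> Z" "card R \<le> card C" "\<And>v. v \<in> Z \<Longrightarrow> \<exists>u\<in>R. idx u = idx v"
proof
  define rep where "rep c = (SOME v. v \<in> Z \<and> idx v = c)" for c
  have rep: "rep (idx v) \<in> Z \<and> idx (rep (idx v)) = idx v" if "v \<in> Z" for v
    unfolding rep_def using someI[where P = "\<lambda>u. u \<in> Z \<and> idx u = idx v"] that by blast
  have finite_idx: "finite (idx ` Z)" using assms by (rule finite_subset)
  show "finite (rep ` idx ` Z)" using finite_idx by (rule finite_imageI)
  show "rep ` idx ` Z \<subseteq> Z" using rep by auto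
  have "card (rep ` idx ` Z) \<le> card (idx ` Z)" using finite_idx by (rule card_image_le)
  also have "\<dots> \<le> card C" using assms by (rule card_mono[rotated])
  finally show "card (rep ` idx ` Z) \<le> card C" .
  show "\<exists>u\<in>rep ` idx ` Z. idx u = idx v" if "v \<in> Z" for v
    using rep[OF that] that by blast
qed

text \<open>Cut the bounding box of Z into n^k congruent subboxes and pick one point of Z in each
  subbox that meets Z.\<close>
lemma bounded_grid_cover:
  fixes Z :: "(real^'k) set"
  assumes "bounded Z" "n > 0"
  obtains R where "finite R" "R \<subseteq> Z" "card R \<le> n ^ CARD('k)"
    and "\<And>v. v \<in> Z \<Longrightarrow> \<exists>u\<in>R. (norm (v - u))\<^sup>2 \<le> CARD('k) * (diameter Z / n)\<^sup>2"
proof (cases "Z = {}")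
  case False
  define D where "D = diameter Z"
  have D: "D \<ge> 0" unfolding D_def using assms(1) by (rule diameter_ge_0)
  obtain m where m: "\<And>v i. v \<in> Z \<Longrightarrow> m i \<le> v $ i \<and> v $ i \<le> m i + D"
    using bounded_coordinate_range[OF assms(1) False] unfolding D_def by blast
  define idx where "idx v = (\<lambda>i. min (n - 1) (nat \<lfloor>(v $ i - m i) * n / D\<rfloor>))" for v
  have close: "\<bar>(v - u) $ i\<bar> \<le> D / n" if "v \<in> Z" "u \<in> Z" "idx v = idx u" for v u i
  proof (cases "D = 0")
    case True
    have "\<bar>(v - u) $ i\<bar> \<le> norm (v - u)" by (rule component_le_norm_cart)
    also have "\<dots> \<le> D"
      using diameter_bounded_bound[OF assms(1) that(1,2)] unfolding D_def by (simp add: dist_norm)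
    finally show ?thesis using True by simp
  next
    case False
    have "idx v i = idx u i" using that(3) by simp
    then show ?thesis
      using same_grid_cell_dist_le[of n D "v $ i" "m i" "u $ i"] m[OF that(1), of i] m[OF that(2), of i]
        assms(2) False D unfolding idx_def by simp
  qed
  have "idx ` Z \<subseteq> PiE UNIV (\<lambda>_. {..<n})"
    using assms(2) by (auto simp: idx_def PiE_iff)
  moreover have "finite (PiE (UNIV :: 'k set) (\<lambda>_. {..<n}))"
    by (simp add: finite_PiE)
  ultimately obtain R where R: "finite R" "R \<subseteq> Z" "card R \<le> card (PiE (UNIV :: 'k set) (\<lambda>_. {..<n}))"
    and rep: "\<And>v. v \<in> Z \<Longrightarrow> \<exists>u\<in>R. idx u = idx v"
    by (rule finite_image_representatives) blast
  show ?thesis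
  proof (rule that[OF R(1,2)])
    show "card R \<le> n ^ CARD('k)" using R(3) by (simp add: card_PiE)
    show "\<exists>u\<in>R. (norm (v - u))\<^sup>2 \<le> CARD('k) * (diameter Z / n)\<^sup>2" if v: "v \<in> Z" for v
    proof -
      obtain u where "u \<in> R" "idx u = idx v" using rep[OF v] by blast
      moreover from this have "u \<in> Z" using R(2) by blast
      ultimately show ?thesis
        using close[OF v \<open>u \<in> Z\<close>] unfolding D_def by (intro bexI[of _ u] sq_norm_le_of_coords_le) auto
    qed
  qed
qed simp

lemma ln_card_plus_half_le:
  fixes t :: real
  assumes "t \<ge> 0" "0 < c" "c \<le> (nat \<lfloor>t\<rfloor> + 1) ^ k"
  shows "ln c + k / 2 \<le> k * ln (2 + 2 * t)"
proof -
  have "real c \<le> real ((nat \<lfloor>t\<rfloor> + 1) ^ k)"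
    using assms(3) by (simp only: of_nat_le_iff)
  then have "ln c \<le> ln (real ((nat \<lfloor>t\<rfloor> + 1) ^ k))"
    by (rule ln_mono) (use assms(2) in simp)
  also have "\<dots> = k * ln (real (nat \<lfloor>t\<rfloor> + 1))"
    by (simp only: of_nat_power ln_realpow of_nat_add of_nat_1)
  also have "\<dots> \<le> k * ln (1 + t)"
  proof (rule mult_left_mono)
    show "ln (real (nat \<lfloor>t\<rfloor> + 1)) \<le> ln (1 + t)"
      by (rule ln_mono) (use assms(1) in linarith)+
  qed simp
  finally have "ln c \<le> k * ln (1 + t)" .
  moreover have "k * (1 / 2) \<le> k * ln (2 :: real)"
    using ln2_ge_two_thirds by (intro mult_left_mono) auto
  moreover have "ln (2 + 2 * t) = ln 2 + ln (1 + t)"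
    using assms(1) ln_mult_pos[of 2 "1 + t"] by simp
  ultimately show ?thesis by (simp add: distrib_left)
qed

lemma lipschitz_image_grid_cover:
  fixes Z :: "(real^'k) set" and f :: "real^'k \<Rightarrow> real^'d" and L \<sigma> :: real
  assumes "bounded Z" "L-lipschitz_on Z f" "\<sigma> > 0"
  obtains R where "finite R" "R \<subseteq> Z" "card R \<le> (nat \<lfloor>diameter Z * L / \<sigma>\<rfloor> + 1) ^ CARD('k)"
    and "\<And>v. v \<in> Z \<Longrightarrow> \<exists>u\<in>R. (norm (f v - f u))\<^sup>2 \<le> CARD('k) * \<sigma>\<^sup>2"
proof -
  define t where "t = diameter Z * L / \<sigma>"
  define n where "n = nat \<lfloor>t\<rfloor> + 1"
  have L: "L \<ge> 0" using assms(2) by (rule lipschitz_on_nonneg)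
  have t: "t \<ge> 0" unfolding t_def using diameter_ge_0[OF assms(1)] L assms(3) by simp
  obtain R where R: "finite R" "R \<subseteq> Z" "card R \<le> n ^ CARD('k)"
    and cover: "\<And>v. v \<in> Z \<Longrightarrow> \<exists>u\<in>R. (norm (v - u))\<^sup>2 \<le> CARD('k) * (diameter Z / n)\<^sup>2"
    using bounded_grid_cover[OF assms(1), of n] unfolding n_def by auto
  show ?thesis
  proof (rule that[OF R[unfolded n_def t_def]])
    fix v assume v: "v \<in> Z"
    obtain u where u: "u \<in> R" "(norm (v - u))\<^sup>2 \<le> CARD('k) * (diameter Z / n)\<^sup>2"
      using cover[OF v] by blast
    have "(norm (f v - f u))\<^sup>2 \<le> (L * norm (v - u))\<^sup>2"
      using lipschitz_onD[OF assms(2) v] u(1) R(2) by (intro power_mono) (auto simp: dist_norm)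
    also have "\<dots> \<le> L\<^sup>2 * (CARD('k) * (diameter Z / n)\<^sup>2)"
      using u(2) by (simp add: power_mult_distrib mult_left_mono)
    also have "\<dots> = CARD('k) * (t * \<sigma> / n)\<^sup>2"
      using assms(3) unfolding t_def by (simp add: power_mult_distrib power_divide)
    also have "\<dots> \<le> CARD('k) * \<sigma>\<^sup>2"
      using t assms(3) unfolding n_def
      by (intro mult_left_mono power_mono) (auto simp: divide_le_eq, linarith)
    finally show "\<exists>u\<in>R. (norm (f v - f u))\<^sup>2 \<le> CARD('k) * \<sigma>\<^sup>2" using u(1) by blast
  qed
qed

text \<open>Q averages the laws at the points u of a cover R with every f v within divergence k/2 of
  some f u; averaging over card R components costs at most ln (card R) in divergence.\<close>
lemma quant_gauss_reference_law:
  fixes Z :: "(real^'k) set" and f :: "real^'k \<Rightarrow> real^'d"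
  assumes "bounded Z" "Z \<noteq> {}" "L-lipschitz_on Z f" "\<sigma> > 0"
  obtains Q where "\<And>x. x \<in> PiE UNIV (\<lambda>_. {0..S}) \<Longrightarrow> Q x > 0"
    and "(\<Sum>x\<in>PiE UNIV (\<lambda>_. {0..S}). Q x) = 1"
    and "\<And>v. v \<in> Z \<Longrightarrow> discrete_kl (PiE UNIV (\<lambda>_. {0..S})) (quant_gauss_law \<sigma> S (f v)) Q
          \<le> CARD('k) * ln (2 + 2 * diameter Z * L / \<sigma>)"
proof -
  define X where "X = PiE (UNIV :: 'd set) (\<lambda>_. {0..S})"
  define t where "t = diameter Z * L / \<sigma>"
  define n where "n = nat \<lfloor>t\<rfloor> + 1"
  have t: "t \<ge> 0"
    unfolding t_def using diameter_ge_0[OF assms(1)] lipschitz_on_nonneg[OF assms(3)] assms(4) by simp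
  obtain R where R: "finite R" "R \<subseteq> Z" "card R \<le> n ^ CARD('k)"
    and cover: "\<And>v. v \<in> Z \<Longrightarrow> \<exists>u\<in>R. (norm (f v - f u))\<^sup>2 \<le> CARD('k) * \<sigma>\<^sup>2"
    using lipschitz_image_grid_cover[OF assms(1,3,4)] unfolding n_def t_def by blast
  have "R \<noteq> {}" using cover assms(2) by blast
  then have card_R: "card R > 0" using R(1) by (simp add: card_gt_0_iff)
  define Q where "Q x = (\<Sum>u\<in>R. quant_gauss_law \<sigma> S (f u) x) / card R" for x
  show ?thesis
  proof
    show "Q x > 0" if "x \<in> PiE UNIV (\<lambda>_. {0..S})" for x
      unfolding Q_def using R(1) \<open>R \<noteq> {}\<close> card_R quant_gauss_law_pos[OF assms(4) that]
      by (intro divide_pos_pos sum_pos) auto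
    show "(\<Sum>x\<in>PiE UNIV (\<lambda>_. {0..S}). Q x) = 1"
      unfolding Q_def sum_divide_distrib[symmetric] using card_R
      by (subst sum.swap) (simp add: sum_quant_gauss_law[OF assms(4)])
    fix v assume v: "v \<in> Z"
    obtain u where u: "u \<in> R" "(norm (f v - f u))\<^sup>2 \<le> CARD('k) * \<sigma>\<^sup>2"
      using cover[OF v] by blast
    have "discrete_kl X (quant_gauss_law \<sigma> S (f v)) (quant_gauss_law \<sigma> S (f u))
        \<le> (norm (f v - f u))\<^sup>2 / (2 * \<sigma>\<^sup>2)"
      unfolding X_def by (rule quant_gauss_law_kl_le[OF assms(4)])
    also have "\<dots> \<le> CARD('k) / 2"
      using u(2) assms(4) by (simp add: divide_le_eq)
    finally have kl_u: "discrete_kl X (quant_gauss_law \<sigma> S (f v)) (quant_gauss_law \<sigma> S (f u))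
        \<le> CARD('k) / 2" .
    have "discrete_kl X (quant_gauss_law \<sigma> S (f v)) Q
        \<le> ln (card R) + discrete_kl X (quant_gauss_law \<sigma> S (f v)) (quant_gauss_law \<sigma> S (f u))"
      unfolding Q_def X_def using R(1) u(1) assms(4)
      by (intro discrete_kl_mixture_le)
        (auto simp: sum_quant_gauss_law quant_gauss_law_pos less_imp_le)
    also have "\<dots> \<le> CARD('k) * ln (2 + 2 * t)"
      using kl_u ln_card_plus_half_le[OF t, of "card R" "CARD('k)"] card_R R(3)
      unfolding n_def by simp
    finally show "discrete_kl (PiE UNIV (\<lambda>_. {0..S})) (quant_gauss_law \<sigma> S (f v)) Q
        \<le> CARD('k) * ln (2 + 2 * diameter Z * L / \<sigma>)"
      unfolding X_def t_def by (simp add: mult.assoc)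
  qed
qed

section \<open>The law of the quantised observation\<close>

lemma (in prob_space) pair_distr_eq_distr_pair:
  assumes [measurable]: "X \<in> measurable M S" "Y \<in> measurable M T"
    and indep: "\<And>A B. A \<in> sets S \<Longrightarrow> B \<in> sets T \<Longrightarrow>
      measure M {\<omega>\<in>space M. X \<omega> \<in> A \<and> Y \<omega> \<in> B}
      = measure M {\<omega>\<in>space M. X \<omega> \<in> A} * measure M {\<omega>\<in>space M. Y \<omega> \<in> B}"
  shows "distr M S X \<Otimes>\<^sub>M distr M T Y = distr M (S \<Otimes>\<^sub>M T) (\<lambda>\<omega>. (X \<omega>, Y \<omega>))"
proof (rule pair_measure_eqI)
  show "sigma_finite_measure (distr M S X)" "sigma_finite_measure (distr M T Y)"
    by (auto intro!: prob_space_imp_sigma_finite prob_space_distr)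
  show "sets (distr M S X \<Otimes>\<^sub>M distr M T Y) = sets (distr M (S \<Otimes>\<^sub>M T) (\<lambda>\<omega>. (X \<omega>, Y \<omega>)))"
    by (simp cong: sets_pair_measure_cong)
  fix A B assume "A \<in> sets (distr M S X)" "B \<in> sets (distr M T Y)"
  then have [measurable]: "A \<in> sets S" "B \<in> sets T" by auto
  have "emeasure (distr M (S \<Otimes>\<^sub>M T) (\<lambda>\<omega>. (X \<omega>, Y \<omega>))) (A \<times> B)
      = emeasure M {\<omega>\<in>space M. X \<omega> \<in> A \<and> Y \<omega> \<in> B}"
    by (subst emeasure_distr) (auto intro!: arg_cong[where f = "emeasure M"])
  also have "\<dots> = emeasure M {\<omega>\<in>space M. X \<omega> \<in> A} * emeasure M {\<omega>\<in>space M. Y \<omega> \<in> B}"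
    using indep by (simp add: emeasure_eq_measure ennreal_mult)
  also have "\<dots> = emeasure (distr M S X) A * emeasure (distr M T Y) B"
    by (simp add: emeasure_distr vimage_def Int_def conj_commute)
  finally show "emeasure (distr M S X) A * emeasure (distr M T Y) B
      = emeasure (distr M (S \<Otimes>\<^sub>M T) (\<lambda>\<omega>. (X \<omega>, Y \<omega>))) (A \<times> B)" ..
qed

lemma nn_integral_lborel_vec_prod:
  fixes F :: "'d::finite \<Rightarrow> real \<Rightarrow> real"
  assumes "\<And>i. F i \<in> borel_measurable borel" "\<And>i t. 0 \<le> F i t"
  shows "(\<integral>\<^sup>+e. ennreal (\<Prod>i\<in>UNIV. F i ((e :: real^'d) $ i)) \<partial>lborel)
       = (\<Prod>i\<in>UNIV. \<integral>\<^sup>+t. ennreal (F i t) \<partial>lborel)"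
proof -
  have inj: "inj (\<lambda>i::'d. axis i (1::real))"
    by (rule injI) (simp add: axis_eq_axis)
  have Basis: "(Basis :: (real^'d) set) = range (\<lambda>i. axis i 1)"
    by (auto simp: Basis_vec_def)
  define G where "G b = F (inv (\<lambda>i. axis i (1::real)) b)" for b :: "real^'d"
  have G_axis: "G (axis i 1) = F i" for i
    unfolding G_def by (simp add: inv_f_f[OF inj])
  have "(\<integral>\<^sup>+e. (\<Prod>b\<in>Basis. ennreal (G b (e \<bullet> b))) \<partial>lborel) = (\<Prod>b\<in>Basis. \<integral>\<^sup>+t. ennreal (G b t) \<partial>lborel)"
    using assms unfolding G_def by (intro nn_integral_lborel_prod) auto
  then show ?thesis
    unfolding Basis by (simp add: prod.reindex[OF inj] G_axis inner_axis prod_ennreal assms(2))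
qed

lemma borel_measurable_vec_nth [measurable (raw)]:
  "f \<in> borel_measurable M \<Longrightarrow> (\<lambda>\<omega>. (f \<omega> :: real^'d) $ i) \<in> borel_measurable M"
  using measurable_compose[OF _ borel_measurable_nth] by blast

lemma emeasure_quant_add_gauss:
  fixes w :: "real^'d"
  assumes "\<sigma> > 0"
  shows "emeasure (density lborel (\<lambda>y. ennreal (iso_gauss_density \<sigma> y))) {e. quant S (w + e) = x}
       = ennreal (quant_gauss_law \<sigma> S w x)"
proof -
  have [measurable]: "{e. quant S (w + e) = x} \<in> sets (lborel :: (real^'d) measure)"
    unfolding quant_eq_iff by measurable
  have "emeasure (density lborel (\<lambda>y. ennreal (iso_gauss_density \<sigma> y))) {e. quant S (w + e) = x}
      = (\<integral>\<^sup>+e. ennreal (\<Prod>i\<in>UNIV. normal_density 0 \<sigma> (e $ i) * indicator (quant_cell S (x i)) (w $ i + e $ i)) \<partial>lborel)"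
    unfolding iso_gauss_density_def
    by (subst emeasure_density)
      (auto intro!: nn_integral_cong simp: quant_eq_iff prod.distrib indicator_def
        ennreal_mult'[symmetric] prod_nonneg normal_density_nonneg)
  also have "\<dots> = (\<Prod>i\<in>UNIV. \<integral>\<^sup>+t. ennreal (normal_density 0 \<sigma> t * indicator (quant_cell S (x i)) (w $ i + t)) \<partial>lborel)"
    by (rule nn_integral_lborel_vec_prod) (auto simp: normal_density_nonneg)
  also have "\<dots> = ennreal (quant_gauss_law \<sigma> S w x)"
    unfolding quant_gauss_law_def gauss_cell_prob_eq_nn_integral[OF assms, symmetric]
    by (simp add: prod_ennreal gauss_cell_prob_nonneg)
  finally show ?thesis .
qed

lemma borel_measurable_quant_gauss_law [measurable]:
  "(\<lambda>w. quant_gauss_law \<sigma> S w x) \<in> borel_measurable borel"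
  unfolding quant_gauss_law_def by measurable

lemma (in prob_space) emeasure_indep_pair_event:
  assumes [measurable]: "X \<in> measurable M S" "Y \<in> measurable M T" "E \<in> sets (S \<Otimes>\<^sub>M T)"
    and indep: "\<And>A B. A \<in> sets S \<Longrightarrow> B \<in> sets T \<Longrightarrow>
      measure M {\<omega>\<in>space M. X \<omega> \<in> A \<and> Y \<omega> \<in> B}
      = measure M {\<omega>\<in>space M. X \<omega> \<in> A} * measure M {\<omega>\<in>space M. Y \<omega> \<in> B}"
  shows "emeasure M {\<omega>\<in>space M. (X \<omega>, Y \<omega>) \<in> E}
       = (\<integral>\<^sup>+\<omega>. emeasure (distr M T Y) (Pair (X \<omega>) -` E) \<partial>M)"
proof -
  interpret Y: prob_space "distr M T Y" by (rule prob_space_distr) simp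
  have "emeasure M {\<omega>\<in>space M. (X \<omega>, Y \<omega>) \<in> E} = emeasure (distr M (S \<Otimes>\<^sub>M T) (\<lambda>\<omega>. (X \<omega>, Y \<omega>))) E"
    by (subst emeasure_distr) (auto intro!: arg_cong[where f = "emeasure M"])
  also have "\<dots> = emeasure (distr M S X \<Otimes>\<^sub>M distr M T Y) E"
    by (rule arg_cong[where f = "\<lambda>N. emeasure N E"])
      (rule pair_distr_eq_distr_pair[OF assms(1,2) indep, symmetric])
  also have "\<dots> = (\<integral>\<^sup>+x. emeasure (distr M T Y) (Pair x -` E) \<partial>distr M S X)"
    by (rule Y.emeasure_pair_measure_alt) (simp cong: sets_pair_measure_cong)
  also have "\<dots> = (\<integral>\<^sup>+\<omega>. emeasure (distr M T Y) (Pair (X \<omega>) -` E) \<partial>M)"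
    by (subst nn_integral_distr) (auto intro: Y.measurable_emeasure_Pair)
  finally show ?thesis .
qed

lemma prob_quant_add_gauss:
  fixes z :: "'w \<Rightarrow> 'b::topological_space" and g :: "'b \<Rightarrow> real^'d" and \<epsilon> :: "'w \<Rightarrow> real^'d"
  assumes "prob_space M" "\<sigma> > 0"
    and [measurable]: "z \<in> borel_measurable M" "g \<in> borel_measurable borel"
    and gauss: "distributed M lborel \<epsilon> (\<lambda>y. ennreal (iso_gauss_density \<sigma> y))"
    and indep: "\<forall>A\<in>sets borel. \<forall>B\<in>sets borel.
      measure M {\<omega>\<in>space M. z \<omega> \<in> A \<and> \<epsilon> \<omega> \<in> B}
      = measure M {\<omega>\<in>space M. z \<omega> \<in> A} * measure M {\<omega>\<in>space M. \<epsilon> \<omega> \<in> B}"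
  shows "measure M {\<omega>\<in>space M. quant S (g (z \<omega>) + \<epsilon> \<omega>) = x}
       = (\<integral>\<omega>. quant_gauss_law \<sigma> S (g (z \<omega>)) x \<partial>M)"
proof -
  interpret prob_space M by fact
  have [measurable]: "\<epsilon> \<in> borel_measurable M"
    using distributed_measurable[OF gauss] by simp
  define E where "E = {(v, e). quant S (g v + e) = x}"
  have "E = {p \<in> space (borel \<Otimes>\<^sub>M lborel). \<forall>i. (g (fst p) + snd p) $ i \<in> quant_cell S (x i)}"
    by (auto simp: E_def quant_eq_iff space_pair_measure)
  also have "\<dots> \<in> sets (borel \<Otimes>\<^sub>M lborel)" by measurable
  finally have "E \<in> sets (borel \<Otimes>\<^sub>M lborel)" .
  then have "emeasure M {\<omega>\<in>space M. (z \<omega>, \<epsilon> \<omega>) \<in> E}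
      = (\<integral>\<^sup>+\<omega>. emeasure (distr M lborel \<epsilon>) (Pair (z \<omega>) -` E) \<partial>M)"
    using indep by (intro emeasure_indep_pair_event) auto
  also have "\<dots> = (\<integral>\<^sup>+\<omega>. ennreal (quant_gauss_law \<sigma> S (g (z \<omega>)) x) \<partial>M)"
    unfolding distributed_distr_eq_density[OF gauss]
    by (simp add: E_def vimage_def emeasure_quant_add_gauss[OF assms(2)])
  also have "\<dots> = ennreal (\<integral>\<omega>. quant_gauss_law \<sigma> S (g (z \<omega>)) x \<partial>M)"
  proof (rule nn_integral_eq_integral)
    show "integrable M (\<lambda>\<omega>. quant_gauss_law \<sigma> S (g (z \<omega>)) x)"
      by (intro integrable_const_bound[where B = 1] AE_I2)
        (auto simp: quant_gauss_law_nonneg quant_gauss_law_le_1 assms(2))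
  qed (simp add: quant_gauss_law_nonneg)
  finally show ?thesis
    by (simp add: E_def emeasure_eq_measure integral_nonneg quant_gauss_law_nonneg)
qed

lemma closed_continuous_on_borel_extension:
  fixes f :: "'a::euclidean_space \<Rightarrow> 'b::euclidean_space"
  assumes "closed Z" "continuous_on Z f"
  obtains g where "g \<in> borel_measurable borel" "\<And>v. v \<in> Z \<Longrightarrow> g v = f v"
proof
  show "(\<lambda>v. indicator Z v *\<^sub>R f v) \<in> borel_measurable borel"
    using assms by (intro borel_measurable_continuous_on_indicator borel_closed)
qed simp

theorem proposition2:
  fixes M :: "'w measure"
    and Zs :: "(real^'k) set"
    and f :: "real^'k \<Rightarrow> real^'d"
    and z :: "'w \<Rightarrow> real^'k"
    and \<epsilon> :: "'w \<Rightarrow> real^'d"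
    and L \<sigma> :: real and S :: nat
  assumes "prob_space M"
    and "compact Zs"
    and "L-lipschitz_on Zs f"
    and "\<sigma> > 0"
    and "\<forall>\<omega>\<in>space M. z \<omega> \<in> Zs"
    and "distributed M lborel \<epsilon> (\<lambda>y. ennreal (iso_gauss_density \<sigma> y))"
    and "z \<in> borel_measurable M"
    and "\<forall>A\<in>sets borel. \<forall>B\<in>sets borel.
           measure M {\<omega>\<in>space M. z \<omega> \<in> A \<and> \<epsilon> \<omega> \<in> B}
           = measure M {\<omega>\<in>space M. z \<omega> \<in> A} * measure M {\<omega>\<in>space M. \<epsilon> \<omega> \<in> B}"
  shows "dual_total_correlation (PiE UNIV (\<lambda>_. {0..S}))
           (\<lambda>x. measure M {\<omega>\<in>space M. quant S (f (z \<omega>) + \<epsilon> \<omega>) = x})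
         \<le> real CARD('k) * ln (2 + 2 * diameter Zs * L / \<sigma>)"
proof -
  interpret prob_space M by fact
  have "Zs \<noteq> {}" using assms(5) not_empty by blast
  obtain g where g [measurable]: "g \<in> borel_measurable borel" and fg: "\<And>v. v \<in> Zs \<Longrightarrow> g v = f v"
    using closed_continuous_on_borel_extension compact_imp_closed[OF assms(2)]
      lipschitz_on_continuous_on[OF assms(3)] by blast
  have gz: "g (z \<omega>) = f (z \<omega>)" if "\<omega> \<in> space M" for \<omega>
    using fg assms(5) that by simp
  note [measurable] = assms(7)
  interpret product_mixture M "{0..S}" "\<lambda>\<omega> i a. gauss_cell_prob \<sigma> S (g (z \<omega>) $ i) a"
    by unfold_locales (use assms(4) in \<open>simp_all add: gauss_cell_prob_pos sum_gauss_cell_prob\<close>)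
  have law: "mixture = (\<lambda>x. measure M {\<omega>\<in>space M. quant S (f (z \<omega>) + \<epsilon> \<omega>) = x})"
    using prob_quant_add_gauss[OF assms(1,4,7) g assms(6,8)] gz
    by (simp add: fun_eq_iff mixture_def prod_law_def quant_gauss_law_def cong: conj_cong)
  obtain Q where Q_pos: "\<And>x. x \<in> outcomes \<Longrightarrow> Q x > 0" and Q_sum: "(\<Sum>x\<in>outcomes. Q x) = 1"
    and Q_kl: "\<And>v. v \<in> Zs \<Longrightarrow> discrete_kl outcomes (quant_gauss_law \<sigma> S (f v)) Q
                 \<le> CARD('k) * ln (2 + 2 * diameter Zs * L / \<sigma>)"
    using quant_gauss_reference_law[OF compact_imp_bounded[OF assms(2)] \<open>Zs \<noteq> {}\<close> assms(3,4)]
    by blast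
  have "prod_law \<omega> = quant_gauss_law \<sigma> S (f (z \<omega>))" if "\<omega> \<in> space M" for \<omega>
    using gz[OF that] by (simp add: fun_eq_iff prod_law_def quant_gauss_law_def)
  then have "dual_total_correlation outcomes mixture \<le> CARD('k) * ln (2 + 2 * diameter Zs * L / \<sigma>)"
    using Q_sum Q_kl assms(5) by (intro dual_total_correlation_mixture_le[OF Q_pos]) auto
  then show ?thesis unfolding law .
qed

end
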